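(* Let $\Gamma=\{f_1,\dots,f_n\}$ be a family of weak weight-functions and suppose there is a nonzero direction $\mathbf{r}\in[0,1]^n$ such that each $f_i$ has a directional derivative in direction $\mathbf{r}$ at every point and $\frac{\partial f_i}{\partial\mathbf{r}}(\mathbf{x})\ge 0$ for every $i$ and every $\mathbf{x}\in[0,1]^n$. Then $\mathsf{BGM}_\Gamma$ is an $\mathbf{r}$-increasing pre-aggregation function.
   Context: A family of weak weight-functions (wFWF) is a family $\Gamma=\{f_i:[0,1]^n\to[0,1]\mid 1\le i\le n\}$ such that (I) $\sum_{i=1}^n f_i(\mathbf{x})\le 1$ for all $\mathbf{x}\in[0,1]^n$ and (II) $\sum_{i=1}^n f_i(1,\dots,1)=1$. The bounded generalized mixture function is $\mathsf{BGM}_\Gamma(\mathbf{x})=\sum_{i=1}^n f_i(\mathbf{x})\,x_i$. For a nonzero $\mathbf{r}\in\mathbb{R}^n$, $F:[0,1]^n\to[0,1]$ is $\mathbf{r}$-increasing if $F(\mathbf{x})\le F(x_1+tr_1,\dots,x_n+tr_n)$ for all $\mathbf{x}\in[0,1]^n$ and $t>0$ with $(x_1+tr_1,\dots,x_n+tr_n)\in[0,1]^n$. $F$ is a pre-aggregation function if $F(0,\dots,0)=0$, $F(1,\dots,1)=1$ and $F$ is $\mathbf{r}$-increasing for some nonzero $\mathbf{r}\in[0,1]^n$. *)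

theory Defs
  imports "HOL-Analysis.Analysis"
begin

definition unit_cube :: "(real ^ 'n) set" where
  "unit_cube = {x. \<forall>i. 0 \<le> x $ i \<and> x $ i \<le> 1}"

definition wFWF :: "('n::finite \<Rightarrow> real ^ 'n \<Rightarrow> real) \<Rightarrow> bool" where
  "wFWF f \<longleftrightarrow>
     (\<forall>i. \<forall>x\<in>unit_cube. 0 \<le> f i x \<and> f i x \<le> 1) \<and>
     (\<forall>x\<in>unit_cube. (\<Sum>i\<in>UNIV. f i x) \<le> 1) \<and>
     (\<Sum>i\<in>UNIV. f i (\<chi> j. 1)) = 1"

definition BGM :: "('n::finite \<Rightarrow> real ^ 'n \<Rightarrow> real) \<Rightarrow> real ^ 'n \<Rightarrow> real" where
  "BGM f x = (\<Sum>i\<in>UNIV. f i x * x $ i)"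

definition r_increasing :: "real ^ 'n \<Rightarrow> (real ^ 'n \<Rightarrow> real) \<Rightarrow> bool" where
  "r_increasing r F \<longleftrightarrow>
     (\<forall>x\<in>unit_cube. \<forall>t>0. x + t *\<^sub>R r \<in> unit_cube \<longrightarrow> F x \<le> F (x + t *\<^sub>R r))"

definition pre_aggregation :: "(real ^ 'n \<Rightarrow> real) \<Rightarrow> bool" where
  "pre_aggregation F \<longleftrightarrow>
     (\<forall>x\<in>unit_cube. 0 \<le> F x \<and> F x \<le> 1) \<and>
     F (\<chi> j. 0) = 0 \<and> F (\<chi> j. 1) = 1 \<and>
     (\<exists>r\<in>unit_cube. r \<noteq> 0 \<and> r_increasing r F)"

text \<open>Directional derivative of g at x in direction r, taken relative to the
  domain [0,1]^n (one-sided at the boundary).\<close>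
definition has_dir_deriv :: "(real ^ 'n \<Rightarrow> real) \<Rightarrow> real ^ 'n \<Rightarrow> real ^ 'n \<Rightarrow> real \<Rightarrow> bool" where
  "has_dir_deriv g r x D \<longleftrightarrow>
     ((\<lambda>t. g (x + t *\<^sub>R r)) has_real_derivative D) (at 0 within {t. x + t *\<^sub>R r \<in> unit_cube})"

end

theory Submission
  imports Defs
begin

text \<open>A nonnegative directional derivative makes each weight \<open>f\<^sub>i\<close> nondecreasing along
  \<open>r\<close>, by the mean value theorem on the segment from \<open>x\<close> to \<open>x + t r\<close>, which stays in the
  convex cube. Since \<open>r \<ge> 0\<close>, every summand \<open>f\<^sub>i(x) x\<^sub>i\<close> of \<open>BGM\<close> is then a product of
  nonnegative nondecreasing factors. The range and boundary conditions follow from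
  \<open>\<Sum>\<^sub>i f\<^sub>i \<le> 1\<close> on the cube, with equality at \<open>(1,\<dots>,1)\<close>.\<close>

lemma unit_cube_eq_cbox: "unit_cube = cbox 0 (1 :: real ^ 'n)"
  by (auto simp: unit_cube_def mem_box_cart)

lemma convex_unit_cube: "convex (unit_cube :: (real ^ 'n) set)"
  unfolding unit_cube_eq_cbox by (rule convex_box)

lemma unit_cube_ray_segment:
  assumes "x \<in> unit_cube" "x + t *\<^sub>R r \<in> unit_cube" "0 \<le> s" "s \<le> t"
  shows "x + s *\<^sub>R r \<in> unit_cube"
proof (cases "t = 0")
  case True
  then show ?thesis using assms by simp
next
  case False
  have "x + s *\<^sub>R r = (1 - s / t) *\<^sub>R x + (s / t) *\<^sub>R (x + t *\<^sub>R r)"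
    using False by (simp add: algebra_simps)
  moreover have "0 \<le> s / t" "s / t \<le> 1"
    using assms(3,4) False by auto
  ultimately show ?thesis
    using convexD_alt[OF convex_unit_cube assms(1,2)] by simp
qed

lemma has_dir_deriv_along_ray:
  assumes "has_dir_deriv h r (x + s *\<^sub>R r) D"
  shows "((\<lambda>u. h (x + u *\<^sub>R r)) has_real_derivative D) (at s within {u. x + u *\<^sub>R r \<in> unit_cube})"
proof -
  have ray: "x + s *\<^sub>R r + v *\<^sub>R r = x + (s + v) *\<^sub>R r" for v
    by (simp add: scaleR_add_left)
  have shift: "{u. x + u *\<^sub>R r \<in> unit_cube} = (+) s ` {v. x + s *\<^sub>R r + v *\<^sub>R r \<in> unit_cube}"
  proof (intro equalityI subsetI)
    fix u
    assume "u \<in> {u. x + u *\<^sub>R r \<in> unit_cube}"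
    then have "u - s \<in> {v. x + s *\<^sub>R r + v *\<^sub>R r \<in> unit_cube}"
      by (simp add: ray)
    then show "u \<in> (+) s ` {v. x + s *\<^sub>R r + v *\<^sub>R r \<in> unit_cube}"
      by (rule rev_image_eqI) simp
  qed (auto simp: ray)
  have "((\<lambda>v. h (x + (s + v) *\<^sub>R r)) has_real_derivative D)
      (at 0 within {v. x + s *\<^sub>R r + v *\<^sub>R r \<in> unit_cube})"
    using assms unfolding has_dir_deriv_def by (simp only: ray)
  then show ?thesis
    unfolding shift using DERIV_at_within_shift[where z = s and x = 0] by simp
qed

lemma r_increasing_if_dir_deriv_nonneg:
  assumes "\<forall>x\<in>unit_cube. \<exists>D. has_dir_deriv h r x D \<and> D \<ge> 0"
  shows "r_increasing r h"
  unfolding r_increasing_def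
proof (intro ballI allI impI)
  fix x t
  assume x: "x \<in> unit_cube" and "t > 0" and xt: "x + t *\<^sub>R r \<in> unit_cube"
  define g where "g u = h (x + u *\<^sub>R r)" for u
  have "\<exists>D. (g has_real_derivative D) (at s within {0..t}) \<and> D \<ge> 0"
    if s: "0 \<le> s" "s \<le> t" for s
  proof -
    obtain D where D: "has_dir_deriv h r (x + s *\<^sub>R r) D" "D \<ge> 0"
      using assms unit_cube_ray_segment[OF x xt s] by blast
    have "{0..t} \<subseteq> {u. x + u *\<^sub>R r \<in> unit_cube}"
      using unit_cube_ray_segment[OF x xt] by auto
    then show ?thesis
      using has_dir_deriv_along_ray[OF D(1)] D(2)
      unfolding g_def by (blast intro: has_field_derivative_subset)
  qed
  then obtain D where D: "\<And>s. 0 \<le> s \<Longrightarrow> s \<le> t \<Longrightarrow>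
      (g has_derivative (\<lambda>v. D s * v)) (at s within {0..t}) \<and> D s \<ge> 0"
    unfolding has_field_derivative_def by metis
  obtain c where c: "c \<in> {0..t}" "g t - g 0 = D c * t"
    using mvt_very_simple[of 0 t g "\<lambda>s v. D s * v"] D \<open>t > 0\<close> by auto
  with D have "D c \<ge> 0"
    by simp
  with c \<open>t > 0\<close> have "g 0 \<le> g t"
    using mult_nonneg_nonneg[of "D c" t] by linarith
  then show "h x \<le> h (x + t *\<^sub>R r)"
    by (simp add: g_def)
qed

lemma r_increasing_BGM:
  assumes "r \<in> unit_cube"
    and nonneg: "\<And>i x. x \<in> unit_cube \<Longrightarrow> 0 \<le> f i x"
    and incr: "\<And>i. r_increasing r (f i)"
  shows "r_increasing r (BGM f)"
  unfolding r_increasing_def BGM_def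
proof (intro ballI allI impI sum_mono)
  fix x t i
  assume x: "x \<in> unit_cube" and "t > 0" and xt: "x + t *\<^sub>R r \<in> unit_cube"
  have "f i x \<le> f i (x + t *\<^sub>R r)"
    using incr x \<open>t > 0\<close> xt unfolding r_increasing_def by blast
  moreover have "x $ i \<le> (x + t *\<^sub>R r) $ i" "0 \<le> x $ i"
    using assms(1) x \<open>t > 0\<close> by (auto simp: unit_cube_def)
  ultimately show "f i x * x $ i \<le> f i (x + t *\<^sub>R r) * (x + t *\<^sub>R r) $ i"
    using nonneg[OF xt] by (intro mult_mono) auto
qed

lemma BGM_in_unit_interval:
  assumes "wFWF f" "x \<in> unit_cube"
  shows "0 \<le> BGM f x \<and> BGM f x \<le> 1"
proof -
  have f: "0 \<le> f i x" "f i x \<le> 1" "(\<Sum>i\<in>UNIV. f i x) \<le> 1" for i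
    using assms unfolding wFWF_def by auto
  have x: "0 \<le> x $ i" "x $ i \<le> 1" for i
    using assms(2) unfolding unit_cube_def by auto
  have "0 \<le> BGM f x"
    unfolding BGM_def using f x by (simp add: sum_nonneg)
  moreover have "BGM f x \<le> (\<Sum>i\<in>UNIV. f i x)"
    unfolding BGM_def using f x by (simp add: sum_mono mult_left_le)
  ultimately show ?thesis
    using f(3) by linarith
qed

lemma BGM_zero: "BGM f (\<chi> j. 0) = 0"
  by (simp add: BGM_def)

lemma BGM_one: "wFWF f \<Longrightarrow> BGM f (\<chi> j. 1) = 1"
  by (simp add: BGM_def wFWF_def)

theorem corollary3:
  fixes f :: "'n::finite \<Rightarrow> real ^ 'n \<Rightarrow> real" and r :: "real ^ 'n"
  assumes "wFWF f"
    and "r \<in> unit_cube" and "r \<noteq> 0"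
    and "\<forall>i. \<forall>x\<in>unit_cube. \<exists>D. has_dir_deriv (f i) r x D \<and> D \<ge> 0"
  shows "pre_aggregation (BGM f) \<and> r_increasing r (BGM f)"
proof -
  have "r_increasing r (BGM f)"
  proof (rule r_increasing_BGM[OF assms(2)])
    show "0 \<le> f i x" if "x \<in> unit_cube" for i x
      using assms(1) that unfolding wFWF_def by blast
    show "r_increasing r (f i)" for i
      using assms(4) by (blast intro: r_increasing_if_dir_deriv_nonneg)
  qed
  then show ?thesis
    unfolding pre_aggregation_def
    using BGM_in_unit_interval[OF assms(1)] BGM_zero BGM_one[OF assms(1)] assms(2,3) by blast
qed

end
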